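(* Let $b>0$, $d\in\mathbb{N}^*$, and let $(G_n)_{n\ge0}$, $G_n=(V_n,E_n)$, be a $(b,d)$-expander. Let $\gamma\in[0,1[$ and $\varepsilon\in\,]0,1[$. Then there is some $c<1$ such that, for $|V_n|$ large enough, \[ \mu_{n,\gamma}\big(L_n^{(1)}\geq c|V_n|\big)\leq \varepsilon. \]
   Context: For a finite graph $G=(V,E)$, $E(A,B)$ is the set of edges with one endpoint in $A$ and the other in $B$, and the Cheeger constant is $c(G)=\min_{A\subset V,\,0<|A|\le |V|/2} |E(A,A^c)|/|A|$. A $(b,d)$-expander is a sequence of finite graphs $G_n=(V_n,E_n)$ such that for every $n$ the maximal degree of $G_n$ is at most $d$ and $c(G_n)>b$, with $|V_n|\to\infty$. Configurations $x\in\{0,1\}^{E_n}$ are identified with the spanning subgraph of $G_n$ keeping exactly the edges $e$ with $x(e)=1$; $\mu_{n,p}$ is the product measure on $\{0,1\}^{E_n}$ under which each $x(e)$ is independently $1$ with probability $p$ and $0$ otherwise. $L_n^{(1)}(x)$ is the number of vertices of the largest connected component of $x$. *)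

theory Defs
  imports "HOL-Probability.Probability"
begin

definition finite_graph :: "'a set \<Rightarrow> 'a set set \<Rightarrow> bool" where
  "finite_graph V E \<longleftrightarrow> finite V \<and> (\<forall>e\<in>E. e \<subseteq> V \<and> card e = 2)"

definition degree :: "'a set set \<Rightarrow> 'a \<Rightarrow> nat" where
  "degree E v = card {e\<in>E. v \<in> e}"

definition max_degree_le :: "'a set \<Rightarrow> 'a set set \<Rightarrow> nat \<Rightarrow> bool" where
  "max_degree_le V E d \<longleftrightarrow> (\<forall>v\<in>V. degree E v \<le> d)"

definition edges_between :: "'a set set \<Rightarrow> 'a set \<Rightarrow> 'a set \<Rightarrow> 'a set set" where
  "edges_between E A B = {e\<in>E. \<exists>u v. e = {u, v} \<and> u \<in> A \<and> v \<in> B}"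

definition cheeger_const :: "'a set \<Rightarrow> 'a set set \<Rightarrow> real" where
  "cheeger_const V E = Min {real (card (edges_between E A (V - A))) / real (card A) | A.
      A \<subseteq> V \<and> 0 < card A \<and> real (card A) \<le> real (card V) / 2}"

definition expander :: "real \<Rightarrow> nat \<Rightarrow> (nat \<Rightarrow> 'a set) \<Rightarrow> (nat \<Rightarrow> 'a set set) \<Rightarrow> bool" where
  "expander b d V E \<longleftrightarrow>
     (\<forall>n. finite_graph (V n) (E n) \<and> max_degree_le (V n) (E n) d \<and> cheeger_const (V n) (E n) > b)
     \<and> filterlim (\<lambda>n. card (V n)) at_top sequentially"

text \<open>Product Bernoulli(p) measure on configurations x : E \<rightarrow> {0,1} (True = 1).\<close>
definition perc_measure :: "'a set set \<Rightarrow> real \<Rightarrow> ('a set \<Rightarrow> bool) pmf" where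
  "perc_measure E p = Pi_pmf E False (\<lambda>_. bernoulli_pmf p)"

definition component :: "'a set \<Rightarrow> 'a set set \<Rightarrow> 'a \<Rightarrow> 'a set" where
  "component V F v = {w\<in>V. (v, w) \<in> {(a, c). {a, c} \<in> F}\<^sup>*}"

definition largest_component :: "'a set \<Rightarrow> 'a set set \<Rightarrow> ('a set \<Rightarrow> bool) \<Rightarrow> nat" where
  "largest_component V E x = Max ((\<lambda>v. card (component V {e\<in>E. x e} v)) ` V)"

end

(*
  A graph of maximal degree d has an independent set S with
  |V| <= (d + 1) |S|. In the percolation configuration each vertex of S is isolated with
  probability at least (1 - \<gamma>)^d, and non-adjacent vertices have disjoint edge stars, so these
  isolation events are pairwise independent. By the second moment method, with probability
  1 - O(1 / |V|) at least (1 - \<gamma>)^d |S| / 2 >= (1 - \<gamma>)^d |V| / (2 (d + 1)) vertices are isolated,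
  and none of them lies in a component with at least two vertices.
*)
theory Submission
  imports Defs
begin

lemma (in prob_space) variance_count_pairwise_indep:
  fixes A :: "'i \<Rightarrow> 'a set"
  assumes "finite S" and events: "\<And>u. u \<in> S \<Longrightarrow> A u \<in> events"
    and indep: "\<And>u v. u \<in> S \<Longrightarrow> v \<in> S \<Longrightarrow> u \<noteq> v \<Longrightarrow>
      prob (A u \<inter> A v) = prob (A u) * prob (A v)"
  defines "Y \<equiv> \<lambda>x. \<Sum>u\<in>S. indicator (A u) x :: real"
  shows "integrable M (\<lambda>x. (Y x)\<^sup>2)" and "expectation Y = (\<Sum>u\<in>S. prob (A u))"
    and "variance Y = (\<Sum>u\<in>S. prob (A u) - (prob (A u))\<^sup>2)"
proof -
  have int: "integrable M (indicator B :: 'a \<Rightarrow> real)" if "B \<in> events" for B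
    using that by (simp add: emeasure_eq_measure)
  have Y2: "(\<lambda>x. (Y x)\<^sup>2) = (\<lambda>x. \<Sum>u\<in>S. \<Sum>v\<in>S. indicator (A u \<inter> A v) x)"
    by (auto simp: Y_def power2_eq_square sum_product indicator_inter_arith)
  have intY: "integrable M Y"
    unfolding Y_def using events by (auto intro!: int)
  show intY2: "integrable M (\<lambda>x. (Y x)\<^sup>2)"
    unfolding Y2 using events by (intro Bochner_Integration.integrable_sum int sets.Int)
  show EY: "expectation Y = (\<Sum>u\<in>S. prob (A u))"
    unfolding Y_def using events by (simp add: int)
  have "expectation (\<lambda>x. (Y x)\<^sup>2) = (\<Sum>u\<in>S. \<Sum>v\<in>S. prob (A u \<inter> A v))"
    unfolding Y2 using events by (simp add: int)
  also have "\<dots> = (\<Sum>u\<in>S. \<Sum>v\<in>S. prob (A u) * prob (A v) +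
      (if u = v then prob (A u) - (prob (A u))\<^sup>2 else 0))"
    using indep by (intro sum.cong refl) (auto simp: power2_eq_square)
  also have "\<dots> = (\<Sum>u\<in>S. prob (A u))\<^sup>2 + (\<Sum>u\<in>S. prob (A u) - (prob (A u))\<^sup>2)"
    using \<open>finite S\<close> by (simp add: sum.distrib sum_product power2_eq_square)
  finally show "variance Y = (\<Sum>u\<in>S. prob (A u) - (prob (A u))\<^sup>2)"
    using variance_eq[OF intY intY2] EY by simp
qed

lemma (in prob_space) prob_few_pairwise_indep_events:
  fixes A :: "'i \<Rightarrow> 'a set"
  assumes "finite S" and events: "\<And>u. u \<in> S \<Longrightarrow> A u \<in> events"
    and indep: "\<And>u v. u \<in> S \<Longrightarrow> v \<in> S \<Longrightarrow> u \<noteq> v \<Longrightarrow>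
      prob (A u \<inter> A v) = prob (A u) * prob (A v)"
    and "0 < a" and a_le: "a \<le> (\<Sum>u\<in>S. prob (A u))"
  shows "prob {x\<in>space M. real (card {u\<in>S. x \<in> A u}) \<le> a / 2} \<le> 4 * real (card S) / a\<^sup>2"
proof -
  define Y where "Y = (\<lambda>x. \<Sum>u\<in>S. indicator (A u) x :: real)"
  define \<mu> where "\<mu> = (\<Sum>u\<in>S. prob (A u))"
  have moments: "integrable M (\<lambda>x. (Y x)\<^sup>2)" "expectation Y = \<mu>"
      "variance Y = (\<Sum>u\<in>S. prob (A u) - (prob (A u))\<^sup>2)"
    unfolding Y_def \<mu>_def using \<open>finite S\<close> events indep by (fact variance_count_pairwise_indep)+
  have Y_meas [measurable]: "Y \<in> borel_measurable M"
    unfolding Y_def using events by (intro borel_measurable_sum borel_measurable_indicator)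
  have Y_card: "Y x = card {u\<in>S. x \<in> A u}" for x
    using \<open>finite S\<close> by (simp add: Y_def indicator_def sum.If_cases Int_def)
  have var: "variance Y \<le> card S"
  proof -
    have "(\<Sum>u\<in>S. prob (A u) - (prob (A u))\<^sup>2) \<le> (\<Sum>u\<in>S. 1)"
      by (intro sum_mono) (smt (verit) prob_le_1 zero_le_power2)
    then show ?thesis using moments(3) by simp
  qed
  have "prob {x\<in>space M. real (card {u\<in>S. x \<in> A u}) \<le> a / 2}
      \<le> prob {x\<in>space M. \<bar>Y x - \<mu>\<bar> \<ge> \<mu> / 2}"
  proof (rule finite_measure_mono)
    show "{x\<in>space M. \<bar>Y x - \<mu>\<bar> \<ge> \<mu> / 2} \<in> events"
      by measurable
  qed (use a_le in \<open>auto simp: Y_card \<mu>_def\<close>)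
  also have "\<dots> \<le> variance Y / (\<mu> / 2)\<^sup>2"
    using Chebyshev_inequality[OF Y_meas moments(1), of "\<mu> / 2"] moments(2) \<open>0 < a\<close> a_le
    by (simp add: \<mu>_def Y_def)
  also have "\<dots> \<le> card S / (a / 2)\<^sup>2"
    using var \<open>0 < a\<close> a_le by (intro frac_le power_mono) (auto simp: \<mu>_def intro: variance_positive)
  finally show ?thesis by (simp add: power2_eq_square ac_simps)
qed

definition independent_set :: "'a set set \<Rightarrow> 'a set \<Rightarrow> bool" where
  "independent_set E S \<longleftrightarrow> (\<forall>u\<in>S. \<forall>v\<in>S. u \<noteq> v \<longrightarrow> {u, v} \<notin> E)"

definition isolated_vertex :: "'a set set \<Rightarrow> 'a \<Rightarrow> bool" where
  "isolated_vertex F u \<longleftrightarrow> (\<forall>e\<in>F. u \<notin> e)"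

lemma finite_graph_finite_edges: "finite_graph V E \<Longrightarrow> finite E"
  unfolding finite_graph_def by (meson Pow_iff finite_Pow_iff finite_subset subsetI)

text \<open>Greedily pick a vertex and discard it together with its at most \<open>d\<close> neighbours.\<close>
lemma independent_set_large:
  assumes "finite V" and "finite E" and "\<forall>e\<in>E. card e = 2" and "max_degree_le V E d"
  shows "\<exists>S\<subseteq>V. independent_set E S \<and> card V \<le> (d + 1) * card S"
  using assms(1,4)
proof (induction "card V" arbitrary: V rule: less_induct)
  case less
  show ?case
  proof (cases "V = {}")
    case True
    then show ?thesis by (auto simp: independent_set_def)
  next
    case False
    then obtain v where v: "v \<in> V" by blast
    define N where "N = {w. {v, w} \<in> E}"
    have "finite (\<Union>E)"
      using assms(2,3) by (metis card.infinite finite_Union zero_neq_numeral)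
    then have fin_N: "finite N"
      by (rule rev_finite_subset) (auto simp: N_def)
    have card_N: "card N \<le> d"
    proof -
      have "v \<notin> N" using assms(3) by (auto simp: N_def)
      then have "inj_on (\<lambda>w. {v, w}) N"
        unfolding inj_on_def by (auto simp: doubleton_eq_iff)
      moreover have "(\<lambda>w. {v, w}) ` N \<subseteq> {e\<in>E. v \<in> e}" by (auto simp: N_def)
      ultimately have "card N \<le> degree E v"
        unfolding degree_def using assms(2) by (intro card_inj_on_le) auto
      then show ?thesis using less.prems(2) v by (auto simp: max_degree_le_def)
    qed
    define V' where "V' = V - insert v N"
    have "card V' < card V"
      unfolding V'_def using v less.prems(1) by (intro psubset_card_mono) auto
    moreover have "max_degree_le V' E d"
      using less.prems(2) by (auto simp: max_degree_le_def V'_def)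
    ultimately obtain S' where
      S': "S' \<subseteq> V'" "independent_set E S'" "card V' \<le> (d + 1) * card S'"
      using less.hyps less.prems(1) unfolding V'_def by blast
    have fin_S': "finite S'" using S'(1) less.prems(1) V'_def finite_subset by blast
    have "v \<notin> S'" using S'(1) by (auto simp: V'_def)
    have "card V \<le> card (V' \<union> insert v N)"
      using less.prems(1) fin_N by (intro card_mono) (auto simp: V'_def)
    also have "\<dots> \<le> card V' + card (insert v N)" by (rule card_Un_le)
    also have "\<dots> \<le> card V' + (d + 1)" using card_N fin_N by (simp add: card_insert_if)
    finally have "card V \<le> (d + 1) * card (insert v S')"
      using S'(3) fin_S' \<open>v \<notin> S'\<close> by simp
    moreover have "insert v S' \<subseteq> V" using v S'(1) V'_def by auto
    moreover have "independent_set E (insert v S')"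
      using S'(1,2) by (auto simp: independent_set_def V'_def N_def insert_commute)
    ultimately show ?thesis by blast
  qed
qed

lemma isolated_vertex_component:
  assumes "isolated_vertex F u"
  shows "component V F u \<subseteq> {u}" and "w \<noteq> u \<Longrightarrow> u \<notin> component V F w"
proof -
  let ?R = "{(a, c). {a, c} \<in> F}"
  have no_step: "(u, z) \<notin> ?R" "(z, u) \<notin> ?R" for z
    using assms by (auto simp: isolated_vertex_def)
  show "component V F u \<subseteq> {u}"
  proof
    fix z assume "z \<in> component V F u"
    then have "(u, z) \<in> ?R\<^sup>*" by (simp add: component_def)
    then show "z \<in> {u}" using no_step by (cases rule: converse_rtranclE) auto
  qed
  assume "w \<noteq> u"
  show "u \<notin> component V F w"
  proof
    assume "u \<in> component V F w"
    then have "(w, u) \<in> ?R\<^sup>*" by (simp add: component_def)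
    then show False using no_step \<open>w \<noteq> u\<close> by (cases rule: rtranclE) auto
  qed
qed

lemma card_component_add_isolated_le:
  assumes "finite V" and "I \<subseteq> V" and "\<forall>u\<in>I. isolated_vertex F u"
    and "2 \<le> card (component V F w)"
  shows "card (component V F w) + card I \<le> card V"
proof -
  let ?C = "component V F w"
  have "?C \<inter> I = {}"
  proof (rule ccontr)
    assume "?C \<inter> I \<noteq> {}"
    then obtain u where u: "u \<in> ?C" "u \<in> I" by blast
    show False
    proof (cases "w = u")
      case True
      then have "card ?C \<le> card {u}"
        using isolated_vertex_component(1)[of F u V] assms(3) u(2) True by (intro card_mono) auto
      then show False using assms(4) by simp
    next
      case False
      moreover have "isolated_vertex F u" using assms(3) u(2) by blast
      ultimately show False using isolated_vertex_component(2) u(1) by metis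
    qed
  qed
  moreover have "?C \<subseteq> V" by (auto simp: component_def)
  ultimately have "card (?C \<union> I) = card ?C + card I"
    using assms(1,2) by (intro card_Un_disjoint) (auto intro: finite_subset)
  moreover have "card (?C \<union> I) \<le> card V"
    using assms(1,2) \<open>?C \<subseteq> V\<close> by (intro card_mono) auto
  ultimately show ?thesis by simp
qed

lemma largest_component_attained:
  assumes "finite V" and "V \<noteq> {}"
  obtains w where "w \<in> V" and "largest_component V E x = card (component V {e\<in>E. x e} w)"
proof -
  let ?f = "\<lambda>v. card (component V {e\<in>E. x e} v)"
  have "Max (?f ` V) \<in> ?f ` V" using assms by (intro Max_in) auto
  then show ?thesis using that unfolding largest_component_def by auto
qed

lemma largest_component_add_isolated_le:
  assumes "finite V" and "V \<noteq> {}" and "I \<subseteq> V" and "\<forall>u\<in>I. isolated_vertex {e\<in>E. x e} u"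
    and "2 \<le> largest_component V E x"
  shows "largest_component V E x + card I \<le> card V"
proof -
  from assms(1,2) obtain w where "largest_component V E x = card (component V {e\<in>E. x e} w)"
    by (rule largest_component_attained)
  then show ?thesis using card_component_add_isolated_le[OF assms(1,3,4)] assms(5) by simp
qed

lemma prob_perc_all_closed:
  assumes "finite E" and "A \<subseteq> E" and "0 \<le> p" and "p \<le> 1"
  shows "measure_pmf.prob (perc_measure E p) {x. \<forall>e\<in>A. \<not> x e} = (1 - p) ^ card A"
proof -
  have "{x. \<forall>e\<in>A. \<not> x e} = Pi E (\<lambda>e. if e \<in> A then {False} else UNIV)"
    using assms(2) by (auto simp: Pi_def)
  then have "measure_pmf.prob (perc_measure E p) {x. \<forall>e\<in>A. \<not> x e} =
      (\<Prod>e\<in>E. measure_pmf.prob (bernoulli_pmf p) (if e \<in> A then {False} else UNIV))"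
    unfolding perc_measure_def using assms(1) by (simp add: measure_Pi_pmf_Pi)
  also have "\<dots> = (\<Prod>e\<in>E. if e \<in> A then 1 - p else 1)"
    using assms by (intro prod.cong) (auto simp: measure_pmf_single)
  also have "\<dots> = (1 - p) ^ card A"
    using assms(1,2) by (simp add: prod.If_cases Int_absorb1)
  finally show ?thesis .
qed

lemma prob_perc_isolated:
  assumes "finite E" and "0 \<le> p" and "p \<le> 1"
  shows "measure_pmf.prob (perc_measure E p) {x. isolated_vertex {e\<in>E. x e} u}
    = (1 - p) ^ degree E u"
proof -
  have "{x. isolated_vertex {e\<in>E. x e} u} = {x. \<forall>e\<in>{e\<in>E. u \<in> e}. \<not> x e}"
    by (auto simp: isolated_vertex_def)
  then show ?thesis
    unfolding degree_def using assms prob_perc_all_closed[of E "{e\<in>E. u \<in> e}" p] by simp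
qed

lemma prob_perc_isolated_pair:
  assumes "finite E" and "0 \<le> p" and "p \<le> 1" and "\<forall>e\<in>E. card e = 2"
    and "u \<noteq> v" and "{u, v} \<notin> E"
  shows "measure_pmf.prob (perc_measure E p)
      ({x. isolated_vertex {e\<in>E. x e} u} \<inter> {x. isolated_vertex {e\<in>E. x e} v}) =
    measure_pmf.prob (perc_measure E p) {x. isolated_vertex {e\<in>E. x e} u} *
    measure_pmf.prob (perc_measure E p) {x. isolated_vertex {e\<in>E. x e} v}"
proof -
  let ?st = "\<lambda>w. {e\<in>E. w \<in> e}"
  have disjoint: "?st u \<inter> ?st v = {}"
  proof (rule ccontr)
    assume "?st u \<inter> ?st v \<noteq> {}"
    then obtain e where e: "e \<in> E" "u \<in> e" "v \<in> e" by blast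
    then have "e = {u, v}"
      using assms(4,5) by (metis card_2_iff doubleton_eq_iff insertE singletonD)
    then show False using assms(6) e(1) by simp
  qed
  have "{x. isolated_vertex {e\<in>E. x e} u} \<inter> {x. isolated_vertex {e\<in>E. x e} v} =
      {x. \<forall>e\<in>?st u \<union> ?st v. \<not> x e}"
    by (auto simp: isolated_vertex_def)
  then have "measure_pmf.prob (perc_measure E p)
      ({x. isolated_vertex {e\<in>E. x e} u} \<inter> {x. isolated_vertex {e\<in>E. x e} v}) =
      (1 - p) ^ card (?st u \<union> ?st v)"
    using assms(1-3) by (simp add: prob_perc_all_closed)
  also have "\<dots> = (1 - p) ^ degree E u * (1 - p) ^ degree E v"
    using disjoint assms(1) by (simp add: card_Un_disjoint degree_def power_add)
  finally show ?thesis using assms(1-3) by (simp add: prob_perc_isolated)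
qed

lemma prob_largest_component_ge:
  fixes \<gamma> :: real
  assumes graph: "finite_graph V E" and deg: "max_degree_le V E d"
    and "0 \<le> \<gamma>" and "\<gamma> < 1" and "3 \<le> card V"
  defines "q \<equiv> (1 - \<gamma>) ^ d"
  shows "measure_pmf.prob (perc_measure E \<gamma>)
      {x. real (largest_component V E x) \<ge> (1 - q / (2 * (real d + 1))) * real (card V)}
    \<le> 4 * (real d + 1) / (q\<^sup>2 * card V)"
proof -
  define M where "M = perc_measure E \<gamma>"
  define A where "A u = {x. isolated_vertex {e\<in>E. x e} u}" for u
  define c where "c = 1 - q / (2 * (real d + 1))"
  have fin_V: "finite V" and E2: "\<forall>e\<in>E. card e = 2"
    using graph by (auto simp: finite_graph_def)
  have fin_E: "finite E" using graph by (rule finite_graph_finite_edges)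
  obtain S where S: "S \<subseteq> V" "independent_set E S" "card V \<le> (d + 1) * card S"
    using independent_set_large[OF fin_V fin_E E2 deg] by blast
  define m where "m = card S"
  have fin_S: "finite S" using S(1) fin_V finite_subset by blast
  have V_le: "real (card V) \<le> (real d + 1) * m"
    using S(3) unfolding m_def by (metis of_nat_le_iff of_nat_mult of_nat_1 of_nat_add)
  have "m > 0" using S(3) \<open>3 \<le> card V\<close> unfolding m_def by (cases "card S") auto
  have "0 < q" and "q \<le> 1" using \<open>0 \<le> \<gamma>\<close> \<open>\<gamma> < 1\<close> by (auto simp: q_def power_le_one)
  have prob_A: "q \<le> measure_pmf.prob M (A u)" if "u \<in> S" for u
  proof -
    have "degree E u \<le> d" using deg S(1) that by (auto simp: max_degree_le_def)
    then show ?thesis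
      unfolding M_def A_def q_def using fin_E \<open>0 \<le> \<gamma>\<close> \<open>\<gamma> < 1\<close>
      by (simp add: prob_perc_isolated power_decreasing)
  qed
  have few_isolated: "measure_pmf.prob M {x. real (card {u\<in>S. x \<in> A u}) \<le> q * m / 2}
      \<le> 4 * real m / (q * m)\<^sup>2"
  proof -
    have "q * m \<le> (\<Sum>u\<in>S. measure_pmf.prob M (A u))"
      using sum_mono[OF prob_A] by (simp add: m_def mult.commute)
    moreover have
      "measure_pmf.prob M (A u \<inter> A v) = measure_pmf.prob M (A u) * measure_pmf.prob M (A v)"
      if "u \<in> S" "v \<in> S" "u \<noteq> v" for u v
      using S(2) that fin_E E2 \<open>0 \<le> \<gamma>\<close> \<open>\<gamma> < 1\<close>
      unfolding M_def A_def independent_set_def by (simp add: prob_perc_isolated_pair)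
    ultimately show ?thesis
      using measure_pmf.prob_few_pairwise_indep_events[OF fin_S, of A M "q * m"]
        \<open>0 < q\<close> \<open>m > 0\<close> by (simp add: m_def)
  qed
  have "{x. real (largest_component V E x) \<ge> c * real (card V)}
      \<subseteq> {x. real (card {u\<in>S. x \<in> A u}) \<le> q * m / 2}"
  proof safe
    fix x assume L: "c * real (card V) \<le> real (largest_component V E x)"
    have "c \<ge> 1 / 2"
      using \<open>q \<le> 1\<close> by (simp add: c_def field_simps)
    then have "c * real (card V) \<ge> 1 / 2 * real (card V)" by (intro mult_right_mono) auto
    then have "real (largest_component V E x) \<ge> 3 / 2"
      using L \<open>3 \<le> card V\<close> by linarith
    then have "largest_component V E x + card {u\<in>S. x \<in> A u} \<le> card V"
      using S(1) fin_V \<open>3 \<le> card V\<close>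
      by (intro largest_component_add_isolated_le) (auto simp: A_def)
    then have "real (largest_component V E x) + real (card {u\<in>S. x \<in> A u}) \<le> real (card V)"
      by (metis of_nat_add of_nat_le_iff)
    then have "real (card {u\<in>S. x \<in> A u}) \<le> (1 - c) * real (card V)"
      using L by (simp add: left_diff_distrib)
    also have "\<dots> = q * real (card V) / (2 * (real d + 1))" by (simp add: c_def)
    also have "\<dots> \<le> q * ((real d + 1) * m) / (2 * (real d + 1))"
      using V_le \<open>0 < q\<close> by (intro divide_right_mono mult_left_mono) auto
    also have "\<dots> = q * m / 2" by (simp add: field_simps)
    finally show "real (card {u\<in>S. x \<in> A u}) \<le> q * m / 2" .
  qed
  then have "measure_pmf.prob M {x. real (largest_component V E x) \<ge> c * real (card V)}
      \<le> measure_pmf.prob M {x. real (card {u\<in>S. x \<in> A u}) \<le> q * m / 2}"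
    by (rule measure_pmf.finite_measure_mono) simp
  also note few_isolated
  also have "4 * real m / (q * m)\<^sup>2 = 4 / (q\<^sup>2 * m)"
    using \<open>m > 0\<close> by (simp add: field_simps power2_eq_square)
  also have "\<dots> \<le> 4 * (real d + 1) / (q\<^sup>2 * card V)"
    using V_le \<open>0 < q\<close> \<open>m > 0\<close> \<open>3 \<le> card V\<close> by (simp add: field_simps power2_eq_square)
  finally show ?thesis unfolding M_def c_def .
qed

theorem lemma4p5:
  fixes b :: real and d :: nat and V :: "nat \<Rightarrow> 'a set" and E :: "nat \<Rightarrow> 'a set set"
    and \<gamma> \<epsilon> :: real
  assumes "b > 0" and "d \<ge> 1" and "expander b d V E"
    and "0 \<le> \<gamma>" and "\<gamma> < 1" and "0 < \<epsilon>" and "\<epsilon> < 1"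
  shows "\<exists>c::real. c < 1 \<and> (\<exists>N. \<forall>n. card (V n) \<ge> N \<longrightarrow>
           measure_pmf.prob (perc_measure (E n) \<gamma>)
             {x. real (largest_component (V n) (E n) x) \<ge> c * real (card (V n))} \<le> \<epsilon>)"
proof -
  define q where "q = (1 - \<gamma>) ^ d"
  define c where "c = 1 - q / (2 * (real d + 1))"
  define N where "N = max 3 (nat \<lceil>4 * (real d + 1) / (q\<^sup>2 * \<epsilon>)\<rceil>)"
  have "q > 0" using assms(5) by (simp add: q_def)
  have "measure_pmf.prob (perc_measure (E n) \<gamma>)
      {x. real (largest_component (V n) (E n) x) \<ge> c * real (card (V n))} \<le> \<epsilon>"
    if "card (V n) \<ge> N" for n
  proof -
    have "4 * (real d + 1) / (q\<^sup>2 * \<epsilon>) \<le> card (V n)"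
      using that unfolding N_def by linarith
    then have bound: "4 * (real d + 1) / (q\<^sup>2 * card (V n)) \<le> \<epsilon>"
      using \<open>q > 0\<close> \<open>0 < \<epsilon>\<close> that by (simp add: N_def field_simps)
    have "finite_graph (V n) (E n)" and "max_degree_le (V n) (E n) d"
      using assms(3) by (auto simp: expander_def)
    from prob_largest_component_ge[OF this assms(4,5)] that bound
    show ?thesis unfolding c_def q_def N_def by fastforce
  qed
  moreover have "c < 1" using \<open>q > 0\<close> by (simp add: c_def)
  ultimately show ?thesis by blast
qed

end
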